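(* Let $X,Y,Z$ be countable discrete metric spaces of bounded geometry, $d_{XY},d'_{XY}\in D(X,Y)$, $d_{YZ},d'_{YZ}\in D(Y,Z)$, with $M_{d_{XY}}(X,Y)=M_{d'_{XY}}(X,Y)$ and $M_{d_{YZ}}(Y,Z)=M_{d'_{YZ}}(Y,Z)$. Then $M_{d_{YZ}\circ d_{XY}}(X,Z)=M_{d'_{YZ}\circ d'_{XY}}(X,Z)$.
   Context: Bounded geometry: for every $R>0$ the number of points in balls of radius $R$ is finite and uniformly bounded. $D(X,Y)$ is the set of metrics on $X\sqcup Y$ restricting to $d_X,d_Y$. For $T:H_X=l^2(X)\to H_Y=l^2(Y)$ bounded, $T_{yx}=\langle T\delta_x,\delta_y\rangle$; $T$ has propagation less than $L$ w.r.t. $d$ if $T_{yx}=0$ whenever $d(x,y)\ge L$; $M_d(X,Y)$ is the norm closure of bounded finite-propagation operators. $(d_{YZ}\circ d_{XY})$ is the metric on $X\sqcup Z$ extending $d_X,d_Z$ with $(d_{YZ}\circ d_{XY})(x,z)=\inf_{y\in Y}(d_{XY}(x,y)+d_{YZ}(y,z))$. *)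

theory Defs
  imports "HOL-Analysis.Analysis"
begin

definition bounded_geometry :: "('a \<Rightarrow> 'a \<Rightarrow> real) \<Rightarrow> bool" where
  "bounded_geometry d \<longleftrightarrow>
     (\<forall>R>0. \<exists>N::nat. \<forall>x. finite {y. d x y < R} \<and> card {y. d x y < R} \<le> N)"

definition D_metrics ::
  "('x \<Rightarrow> 'x \<Rightarrow> real) \<Rightarrow> ('y \<Rightarrow> 'y \<Rightarrow> real) \<Rightarrow> (('x + 'y) \<Rightarrow> ('x + 'y) \<Rightarrow> real) set" where
  "D_metrics dX dY = {d. Metric_space UNIV d \<and>
      (\<forall>a b. d (Inl a) (Inl b) = dX a b) \<and> (\<forall>a b. d (Inr a) (Inr b) = dY a b)}"

text \<open>A bounded operator l2(X) -> l2(Y) is represented by its matrix T y x = <T delta_x, delta_y>.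
  The matrix defines a bounded operator with norm at most C iff the associated sesquilinear
  form is bounded by C on finitely supported vectors.\<close>
definition mat_bound :: "('y \<Rightarrow> 'x \<Rightarrow> complex) \<Rightarrow> real \<Rightarrow> bool" where
  "mat_bound T C \<longleftrightarrow>
     (\<forall>(A::'x set) (B::'y set) v w. finite A \<and> finite B \<longrightarrow>
        cmod (\<Sum>y\<in>B. \<Sum>x\<in>A. cnj (w y) * T y x * v x)
          \<le> C * sqrt (\<Sum>x\<in>A. (cmod (v x))\<^sup>2) * sqrt (\<Sum>y\<in>B. (cmod (w y))\<^sup>2))"

definition bounded_op :: "('y \<Rightarrow> 'x \<Rightarrow> complex) \<Rightarrow> bool" where
  "bounded_op T \<longleftrightarrow> (\<exists>C. mat_bound T C)"

definition op_norm :: "('y \<Rightarrow> 'x \<Rightarrow> complex) \<Rightarrow> real" where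
  "op_norm T = Inf {C. C \<ge> 0 \<and> mat_bound T C}"

definition prop_less ::
  "(('x + 'y) \<Rightarrow> ('x + 'y) \<Rightarrow> real) \<Rightarrow> real \<Rightarrow> ('y \<Rightarrow> 'x \<Rightarrow> complex) \<Rightarrow> bool" where
  "prop_less d L T \<longleftrightarrow> (\<forall>x y. d (Inl x) (Inr y) \<ge> L \<longrightarrow> T y x = 0)"

definition finite_prop ::
  "(('x + 'y) \<Rightarrow> ('x + 'y) \<Rightarrow> real) \<Rightarrow> ('y \<Rightarrow> 'x \<Rightarrow> complex) \<Rightarrow> bool" where
  "finite_prop d T \<longleftrightarrow> (\<exists>L. prop_less d L T)"

definition M_d :: "(('x + 'y) \<Rightarrow> ('x + 'y) \<Rightarrow> real) \<Rightarrow> ('y \<Rightarrow> 'x \<Rightarrow> complex) set" where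
  "M_d d = {T. bounded_op T \<and>
      (\<forall>e>0. \<exists>S. bounded_op S \<and> finite_prop d S \<and> op_norm (\<lambda>y x. T y x - S y x) < e)}"

definition compose_metric ::
  "(('y + 'z) \<Rightarrow> ('y + 'z) \<Rightarrow> real) \<Rightarrow> (('x + 'y) \<Rightarrow> ('x + 'y) \<Rightarrow> real)
     \<Rightarrow> ('x + 'z) \<Rightarrow> ('x + 'z) \<Rightarrow> real" where
  "compose_metric dYZ dXY p q =
     (case (p, q) of
        (Inl x, Inl x') \<Rightarrow> dXY (Inl x) (Inl x')
      | (Inr z, Inr z') \<Rightarrow> dYZ (Inr z) (Inr z')
      | (Inl x, Inr z) \<Rightarrow> (INF y. dXY (Inl x) (Inr y) + dYZ (Inl y) (Inr z))
      | (Inr z, Inl x) \<Rightarrow> (INF y. dXY (Inl x) (Inr y) + dYZ (Inl y) (Inr z)))"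

end

theory Submission
  imports Defs
begin

text \<open>Both sides of the theorem are governed by one coarse invariant of a metric d on X + Y:
  which cross distances d(x, y) are controlled by which. If every d-bounded cross distance is
  d'-bounded then every operator of finite d-propagation has finite d'-propagation, so
  M_d d \<subseteq> M_d d'. Conversely, by bounded geometry and the Schur test, the 0/1 matrix of the
  pairs with d(x, y) < R is a bounded operator of d-propagation at most R; approximating it
  within 1 by an operator of finite d'-propagation forces d' to be bounded on those pairs.
  Control of cross distances passes to the composed metrics because an infimum below R
  is witnessed by some y with both legs below R.\<close>

lemma mat_bound_mono:
  fixes T :: "'y \<Rightarrow> 'x \<Rightarrow> complex"
  assumes "mat_bound T C" and "C \<le> C'" shows "mat_bound T C'"
  unfolding mat_bound_def
proof (intro allI impI)
  fix A :: "'x set" and B :: "'y set" and v w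
  assume "finite A \<and> finite B"
  let ?s = "sqrt (\<Sum>x\<in>A. (cmod (v x))\<^sup>2) * sqrt (\<Sum>y\<in>B. (cmod (w y))\<^sup>2)"
  have "cmod (\<Sum>y\<in>B. \<Sum>x\<in>A. cnj (w y) * T y x * v x) \<le> C * ?s"
    using assms(1) \<open>finite A \<and> finite B\<close> unfolding mat_bound_def mult.assoc by blast
  also have "\<dots> \<le> C' * ?s"
    using assms(2) by (intro mult_right_mono mult_nonneg_nonneg real_sqrt_ge_zero sum_nonneg) auto
  finally show "cmod (\<Sum>y\<in>B. \<Sum>x\<in>A. cnj (w y) * T y x * v x)
      \<le> C' * sqrt (\<Sum>x\<in>A. (cmod (v x))\<^sup>2) * sqrt (\<Sum>y\<in>B. (cmod (w y))\<^sup>2)"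
    by (simp only: mult.assoc)
qed

lemma mat_bound_diff:
  fixes T S :: "'y \<Rightarrow> 'x \<Rightarrow> complex"
  assumes "mat_bound T C1" and "mat_bound S C2"
  shows "mat_bound (\<lambda>y x. T y x - S y x) (C1 + C2)"
  unfolding mat_bound_def
proof (intro allI impI)
  fix A :: "'x set" and B :: "'y set" and v w
  assume fin: "finite A \<and> finite B"
  let ?a = "\<Sum>y\<in>B. \<Sum>x\<in>A. cnj (w y) * T y x * v x"
  let ?b = "\<Sum>y\<in>B. \<Sum>x\<in>A. cnj (w y) * S y x * v x"
  let ?s = "sqrt (\<Sum>x\<in>A. (cmod (v x))\<^sup>2) * sqrt (\<Sum>y\<in>B. (cmod (w y))\<^sup>2)"
  have "(\<Sum>y\<in>B. \<Sum>x\<in>A. cnj (w y) * (T y x - S y x) * v x) = ?a - ?b"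
    by (simp add: right_diff_distrib left_diff_distrib sum_subtractf)
  moreover have "cmod ?a \<le> C1 * ?s" "cmod ?b \<le> C2 * ?s"
    using assms fin unfolding mat_bound_def mult.assoc by blast+
  moreover have "cmod (?a - ?b) \<le> cmod ?a + cmod ?b"
    by (rule norm_triangle_ineq4)
  ultimately show "cmod (\<Sum>y\<in>B. \<Sum>x\<in>A. cnj (w y) * (T y x - S y x) * v x)
      \<le> (C1 + C2) * sqrt (\<Sum>x\<in>A. (cmod (v x))\<^sup>2) * sqrt (\<Sum>y\<in>B. (cmod (w y))\<^sup>2)"
    by (simp add: mult.assoc distrib_right)
qed

lemma bounded_op_diff:
  assumes "bounded_op T" and "bounded_op S" shows "bounded_op (\<lambda>y x. T y x - S y x)"
  using assms mat_bound_diff unfolding bounded_op_def by blast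

lemma mat_bound_entry_le:
  assumes "mat_bound T C" shows "cmod (T y x) \<le> C"
  using assms[unfolded mat_bound_def, rule_format, of "{x}" "{y}" "\<lambda>_. 1" "\<lambda>_. 1"] by simp

lemma norm_entry_le_op_norm:
  assumes "bounded_op T" shows "cmod (T y x) \<le> op_norm T"
  unfolding op_norm_def
proof (rule cInf_greatest)
  obtain C where "mat_bound T C"
    using assms unfolding bounded_op_def by blast
  then have "mat_bound T (max C 0)"
    by (rule mat_bound_mono) simp
  then show "{C. C \<ge> 0 \<and> mat_bound T C} \<noteq> {}"
    by force
qed (auto intro: mat_bound_entry_le)

lemma op_norm_zero: "op_norm (\<lambda>(y::'y) (x::'x). 0) = 0"
proof -
  have "{C. C \<ge> 0 \<and> mat_bound (\<lambda>(y::'y) (x::'x). 0) C} = {0..}"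
    by (auto simp: mat_bound_def intro!: mult_nonneg_nonneg sum_nonneg)
  then show ?thesis
    unfolding op_norm_def by (simp add: cInf_atLeast)
qed

lemma finite_prop_in_M_d:
  assumes "bounded_op T" and "finite_prop d T" shows "T \<in> M_d d"
  unfolding M_d_def using assms by (auto simp: op_norm_zero intro!: exI[of _ T])

lemma sum_if_le_card_bound:
  fixes c :: real
  assumes "finite A" and "finite {x. P x}" and "card {x. P x} \<le> N" and "c \<ge> 0"
  shows "(\<Sum>x\<in>A. if P x then c else 0) \<le> real N * c"
proof -
  have "(\<Sum>x\<in>A. if P x then c else 0) = real (card {x\<in>A. P x}) * c"
    using sum.inter_filter[OF assms(1), of "\<lambda>_. c" P] by simp
  moreover have "card {x\<in>A. P x} \<le> N"
    by (rule le_trans[OF card_mono[OF assms(2)] assms(3)]) auto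
  ultimately show ?thesis
    using assms(4) by (simp add: mult_right_mono)
qed

text \<open>Schur test: Cauchy-Schwarz over the support of the matrix, on which each x is counted
  at most N1 times and each y at most N2 times.\<close>
lemma mat_bound_indicator:
  fixes P :: "'x \<Rightarrow> 'y \<Rightarrow> bool"
  assumes row: "\<And>x. finite {y. P x y} \<and> card {y. P x y} \<le> N1"
    and col: "\<And>y. finite {x. P x y} \<and> card {x. P x y} \<le> N2"
  shows "mat_bound (\<lambda>y x. if P x y then 1 else 0) (sqrt (real N1 * real N2))"
  unfolding mat_bound_def
proof (intro allI impI)
  fix A :: "'x set" and B :: "'y set" and v w
  assume fin: "finite A \<and> finite B"
  define a where "a = (\<lambda>(x, y). if P x y then cmod (w y) else 0)"
  define b where "b = (\<lambda>(x, y). if P x y then cmod (v x) else 0)"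
  let ?V = "\<Sum>x\<in>A. (cmod (v x))\<^sup>2" and ?W = "\<Sum>y\<in>B. (cmod (w y))\<^sup>2"
  let ?M = "\<lambda>y x. if P x y then 1 else 0 :: complex"
  have "cmod (\<Sum>y\<in>B. \<Sum>x\<in>A. cnj (w y) * ?M y x * v x)
      \<le> (\<Sum>y\<in>B. cmod (\<Sum>x\<in>A. cnj (w y) * ?M y x * v x))"
    by (rule norm_sum)
  also have "\<dots> \<le> (\<Sum>y\<in>B. \<Sum>x\<in>A. cmod (cnj (w y) * ?M y x * v x))"
    by (intro sum_mono norm_sum)
  also have "\<dots> = (\<Sum>p\<in>A \<times> B. \<bar>a p\<bar> * \<bar>b p\<bar>)"
    by (subst sum.swap) (auto simp: sum.cartesian_product a_def b_def norm_mult intro!: sum.cong)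
  also have "\<dots> \<le> L2_set a (A \<times> B) * L2_set b (A \<times> B)"
    by (rule L2_set_mult_ineq)
  also have "\<dots> \<le> sqrt (real N2 * ?W) * sqrt (real N1 * ?V)"
  proof (intro mult_mono)
    have "(\<Sum>p\<in>A \<times> B. (a p)\<^sup>2) = (\<Sum>y\<in>B. \<Sum>x\<in>A. if P x y then (cmod (w y))\<^sup>2 else 0)"
      by (subst sum.swap) (auto simp: sum.cartesian_product a_def intro!: sum.cong)
    also have "\<dots> \<le> (\<Sum>y\<in>B. real N2 * (cmod (w y))\<^sup>2)"
      using fin col by (intro sum_mono sum_if_le_card_bound) auto
    finally show "L2_set a (A \<times> B) \<le> sqrt (real N2 * ?W)"
      unfolding L2_set_def by (simp add: sum_distrib_left)
    have "(\<Sum>p\<in>A \<times> B. (b p)\<^sup>2) = (\<Sum>x\<in>A. \<Sum>y\<in>B. if P x y then (cmod (v x))\<^sup>2 else 0)"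
      by (auto simp: sum.cartesian_product b_def intro!: sum.cong)
    also have "\<dots> \<le> (\<Sum>x\<in>A. real N1 * (cmod (v x))\<^sup>2)"
      using fin row by (intro sum_mono sum_if_le_card_bound) auto
    finally show "L2_set b (A \<times> B) \<le> sqrt (real N1 * ?V)"
      unfolding L2_set_def by (simp add: sum_distrib_left)
  qed (auto simp: L2_set_nonneg intro!: mult_nonneg_nonneg sum_nonneg)
  also have "\<dots> = sqrt (real N1 * real N2) * sqrt ?V * sqrt ?W"
    by (simp add: real_sqrt_mult)
  finally show "cmod (\<Sum>y\<in>B. \<Sum>x\<in>A. cnj (w y) * ?M y x * v x)
      \<le> sqrt (real N1 * real N2) * sqrt ?V * sqrt ?W" .
qed

text \<open>The points g y within distance R of p lie in the 2R-ball about any one of them.\<close>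
lemma ball_preimage_card_bound:
  assumes "Metric_space UNIV d" and "bounded_geometry (\<lambda>a b. d (g a) (g b))"
  obtains N where "\<And>p. finite {y. d p (g y) < R} \<and> card {y. d p (g y) < R} \<le> N"
proof (cases "R > 0")
  case False
  then have "{y. d p (g y) < R} = {}" for p
    using Metric_space.nonneg[OF assms(1)] by (auto simp: not_less intro: order_trans)
  then show ?thesis
    using that by simp
next
  case True
  then obtain N where N: "\<And>a. finite {b. d (g a) (g b) < 2 * R} \<and> card {b. d (g a) (g b) < 2 * R} \<le> N"
    using assms(2) unfolding bounded_geometry_def by (metis mult_pos_pos zero_less_numeral)
  have "finite {y. d p (g y) < R} \<and> card {y. d p (g y) < R} \<le> N" for p
  proof (cases "\<exists>y0. d p (g y0) < R")
    case False
    then show ?thesis by simp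
  next
    case True
    then obtain y0 where y0: "d p (g y0) < R" by blast
    have "{y. d p (g y) < R} \<subseteq> {b. d (g y0) (g b) < 2 * R}"
    proof
      fix y
      assume "y \<in> {y. d p (g y) < R}"
      moreover have "d (g y0) (g y) \<le> d p (g y0) + d p (g y)"
        using Metric_space.triangle[OF assms(1), of "g y0" p "g y"]
          Metric_space.commute[OF assms(1), of p "g y0"] by simp
      ultimately show "y \<in> {b. d (g y0) (g b) < 2 * R}"
        using y0 by simp
    qed
    then show ?thesis
      using N[of y0] by (meson card_mono finite_subset order_trans)
  qed
  then show ?thesis
    using that by blast
qed

definition cross_dist_controlled ::
  "(('x + 'y) \<Rightarrow> ('x + 'y) \<Rightarrow> real) \<Rightarrow> (('x + 'y) \<Rightarrow> ('x + 'y) \<Rightarrow> real) \<Rightarrow> bool" where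
  "cross_dist_controlled d d' \<longleftrightarrow>
     (\<forall>R. \<exists>R'. \<forall>x y. d (Inl x) (Inr y) < R \<longrightarrow> d' (Inl x) (Inr y) < R')"

lemma M_d_mono_if_controlled:
  assumes "cross_dist_controlled d d'" shows "M_d d \<subseteq> M_d d'"
proof -
  have "finite_prop d' S" if S: "finite_prop d S" for S
  proof -
    obtain L where L: "prop_less d L S"
      using S unfolding finite_prop_def by blast
    obtain R' where "\<forall>x y. d (Inl x) (Inr y) < L \<longrightarrow> d' (Inl x) (Inr y) < R'"
      using assms unfolding cross_dist_controlled_def by blast
    with L have "prop_less d' R' S"
      unfolding prop_less_def by (meson not_le)
    then show ?thesis
      unfolding finite_prop_def by blast
  qed
  then show ?thesis
    unfolding M_d_def by blast
qed

lemma controlled_if_M_d_subset: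
  assumes D: "d \<in> D_metrics dX dY" and bX: "bounded_geometry dX" and bY: "bounded_geometry dY"
    and sub: "M_d d \<subseteq> M_d d'"
  shows "cross_dist_controlled d d'"
  unfolding cross_dist_controlled_def
proof
  fix R
  have metric: "Metric_space UNIV d"
    using D unfolding D_metrics_def by blast
  have geomY: "bounded_geometry (\<lambda>a b. d (Inr a) (Inr b))"
    and geomX: "bounded_geometry (\<lambda>a b. d (Inl a) (Inl b))"
    using D bX bY unfolding D_metrics_def by auto
  obtain N1 where row: "\<And>p. finite {y. d p (Inr y) < R} \<and> card {y. d p (Inr y) < R} \<le> N1"
    using ball_preimage_card_bound[OF metric geomY, where R = R] by blast
  obtain N2 where col: "\<And>p. finite {x. d p (Inl x) < R} \<and> card {x. d p (Inl x) < R} \<le> N2"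
    using ball_preimage_card_bound[OF metric geomX, where R = R] by blast
  have col_swap: "{x. d (Inl x) (Inr y) < R} = {x. d (Inr y) (Inl x) < R}" for y
    using Metric_space.commute[OF metric] by simp
  define T where "T = (\<lambda>y x. if d (Inl x) (Inr y) < R then 1 else (0::complex))"
  have "mat_bound T (sqrt (real N1 * real N2))"
    unfolding T_def
  proof (rule mat_bound_indicator)
    show "finite {y. d (Inl x) (Inr y) < R} \<and> card {y. d (Inl x) (Inr y) < R} \<le> N1" for x
      by (rule row)
    show "finite {x. d (Inl x) (Inr y) < R} \<and> card {x. d (Inl x) (Inr y) < R} \<le> N2" for y
      unfolding col_swap by (rule col)
  qed
  then have "bounded_op T"
    unfolding bounded_op_def by blast
  moreover have "finite_prop d T"
    unfolding finite_prop_def prop_less_def T_def by (auto intro!: exI[of _ R])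
  ultimately have "T \<in> M_d d'"
    using sub finite_prop_in_M_d by blast
  then have "\<exists>S. bounded_op S \<and> finite_prop d' S \<and> op_norm (\<lambda>y x. T y x - S y x) < 1"
    unfolding M_d_def by simp
  then obtain S where S: "bounded_op S" "finite_prop d' S" "op_norm (\<lambda>y x. T y x - S y x) < 1"
    by blast
  then obtain L where L: "prop_less d' L S"
    unfolding finite_prop_def by blast
  have "d' (Inl x) (Inr y) < L" if "d (Inl x) (Inr y) < R" for x y
  proof (rule ccontr)
    assume "\<not> d' (Inl x) (Inr y) < L"
    then have "S y x = 0"
      using L unfolding prop_less_def by simp
    moreover have "cmod (T y x - S y x) < 1"
      using norm_entry_le_op_norm[OF bounded_op_diff[OF \<open>bounded_op T\<close> S(1)], where y = y and x = x] S(3)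
      by simp
    ultimately show False
      using that by (simp add: T_def)
  qed
  then show "\<exists>R'. \<forall>x y. d (Inl x) (Inr y) < R \<longrightarrow> d' (Inl x) (Inr y) < R'"
    by blast
qed

lemma M_d_eq_iff_controlled:
  assumes "d \<in> D_metrics dX dY" "d' \<in> D_metrics dX dY"
    and "bounded_geometry dX" "bounded_geometry dY"
  shows "M_d d = M_d d' \<longleftrightarrow> cross_dist_controlled d d' \<and> cross_dist_controlled d' d"
  using controlled_if_M_d_subset[OF assms(1,3,4)] controlled_if_M_d_subset[OF assms(2,3,4)]
    M_d_mono_if_controlled by blast

lemma compose_metric_controlled:
  assumes "Metric_space UNIV dXY" "Metric_space UNIV dYZ"
    and "Metric_space UNIV dXY'" "Metric_space UNIV dYZ'"
    and "cross_dist_controlled dXY dXY'" "cross_dist_controlled dYZ dYZ'"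
  shows "cross_dist_controlled (compose_metric dYZ dXY) (compose_metric dYZ' dXY')"
  unfolding cross_dist_controlled_def
proof
  fix R
  obtain R1 where R1: "\<forall>x y. dXY (Inl x) (Inr y) < R \<longrightarrow> dXY' (Inl x) (Inr y) < R1"
    using assms(5) unfolding cross_dist_controlled_def by blast
  obtain R2 where R2: "\<forall>y z. dYZ (Inl y) (Inr z) < R \<longrightarrow> dYZ' (Inl y) (Inr z) < R2"
    using assms(6) unfolding cross_dist_controlled_def by blast
  have nonneg: "dXY p q \<ge> 0" "dYZ p' q' \<ge> 0" "dXY' p q \<ge> 0" "dYZ' p' q' \<ge> 0" for p q p' q'
    using assms(1-4) by (simp_all add: Metric_space.nonneg)
  have "compose_metric dYZ' dXY' (Inl x) (Inr z) < R1 + R2"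
    if "compose_metric dYZ dXY (Inl x) (Inr z) < R" for x z
  proof -
    have "(INF y. dXY (Inl x) (Inr y) + dYZ (Inl y) (Inr z)) < R"
      using that by (simp add: compose_metric_def)
    moreover have "bdd_below (range (\<lambda>y. dXY (Inl x) (Inr y) + dYZ (Inl y) (Inr z)))"
      using nonneg by (meson add_nonneg_nonneg bdd_belowI2)
    ultimately obtain y where y: "dXY (Inl x) (Inr y) + dYZ (Inl y) (Inr z) < R"
      using cINF_less_iff by blast
    then have "dXY (Inl x) (Inr y) < R" "dYZ (Inl y) (Inr z) < R"
      using nonneg(1)[of "Inl x" "Inr y"] nonneg(2)[of "Inl y" "Inr z"] by linarith+
    then have "dXY' (Inl x) (Inr y) + dYZ' (Inl y) (Inr z) < R1 + R2"
      using R1 R2 by (simp add: add_strict_mono)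
    moreover have "(INF y. dXY' (Inl x) (Inr y) + dYZ' (Inl y) (Inr z))
        \<le> dXY' (Inl x) (Inr y) + dYZ' (Inl y) (Inr z)"
      using nonneg by (meson add_nonneg_nonneg bdd_belowI2 cINF_lower UNIV_I)
    ultimately show ?thesis
      by (simp add: compose_metric_def)
  qed
  then show "\<exists>R'. \<forall>x z. compose_metric dYZ dXY (Inl x) (Inr z) < R
      \<longrightarrow> compose_metric dYZ' dXY' (Inl x) (Inr z) < R'"
    by blast
qed

theorem mainTheorem8:
  fixes dX :: "'x::countable \<Rightarrow> 'x \<Rightarrow> real"
    and dY :: "'y::countable \<Rightarrow> 'y \<Rightarrow> real"
    and dZ :: "'z::countable \<Rightarrow> 'z \<Rightarrow> real"
    and dXY dXY' :: "('x + 'y) \<Rightarrow> ('x + 'y) \<Rightarrow> real"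
    and dYZ dYZ' :: "('y + 'z) \<Rightarrow> ('y + 'z) \<Rightarrow> real"
  assumes "Metric_space UNIV dX" and "bounded_geometry dX"
    and "Metric_space UNIV dY" and "bounded_geometry dY"
    and "Metric_space UNIV dZ" and "bounded_geometry dZ"
    and "dXY \<in> D_metrics dX dY" and "dXY' \<in> D_metrics dX dY"
    and "dYZ \<in> D_metrics dY dZ" and "dYZ' \<in> D_metrics dY dZ"
    and "M_d dXY = M_d dXY'"
    and "M_d dYZ = M_d dYZ'"
  shows "M_d (compose_metric dYZ dXY) = M_d (compose_metric dYZ' dXY')"
proof -
  have metrics: "Metric_space UNIV dXY" "Metric_space UNIV dXY'"
      "Metric_space UNIV dYZ" "Metric_space UNIV dYZ'"
    using assms(7-10) unfolding D_metrics_def by auto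
  have "cross_dist_controlled dXY dXY'" "cross_dist_controlled dXY' dXY"
    using M_d_eq_iff_controlled[OF assms(7,8,2,4)] assms(11) by auto
  moreover have "cross_dist_controlled dYZ dYZ'" "cross_dist_controlled dYZ' dYZ"
    using M_d_eq_iff_controlled[OF assms(9,10,4,6)] assms(12) by auto
  ultimately have "cross_dist_controlled (compose_metric dYZ dXY) (compose_metric dYZ' dXY')"
      "cross_dist_controlled (compose_metric dYZ' dXY') (compose_metric dYZ dXY)"
    using compose_metric_controlled metrics by blast+
  then show ?thesis
    using M_d_mono_if_controlled by blast
qed

end
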